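(* Let $k=d_1+d_2+d_3$ with $d_i$ positive integers, $\mathbb R^k=\mathbb R^{d_1}\times\mathbb R^{d_2}\times\mathbb R^{d_3}$ with coordinates $z=(x,y,t)$, and $\rho=y\cdot\partial_y+2t\cdot\partial_t$ (so $e^{-\ell\rho}(x,y,t)=(x,e^{-\ell}y,e^{-2\ell}t)$). Then the family of distributions $\delta(z'-e^{-\ell\rho}z)$, $1\le\ell\le+\infty$, on $\mathbb R^k\times\mathbb R^k$ is bounded in $\mathcal D'_{\Gamma_\rho}(\mathbb R^k\times\mathbb R^k)$, where $$\Gamma_\rho=\bigcup_{1\le\ell\le+\infty}\big\{((z,e^{-\ell\rho}z),(\lambda,e^{\ell\rho}\lambda)):(z,\lambda)\in T^*\mathbb R^k\big\}\subset T^*(\mathbb R^k\times\mathbb R^k).$$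
   Context: For a closed conic set $\Gamma$, $\mathcal D'_\Gamma(U)$ is the space of distributions whose wavefront set is contained in $\Gamma$, with its normal topology given by the seminorms $\sup_{\chi\in\mathcal B}|\langle\Lambda,\chi\rangle|$ ($\mathcal B$ bounded subsets of $C^\infty_c$) and $\sup_{\xi\in V}(1+|\xi|)^N|\widehat{\Lambda\chi}(\xi)|$ for $N\in\mathbb N$, $\chi\in C^\infty_c$ and closed cones $V$ with $(\mathrm{supp}\chi\times V)\cap\Gamma=\emptyset$. A family is bounded if all these seminorms are uniformly bounded. For $\ell=+\infty$, $e^{-\infty\rho}z=(x,0,0)$. *)

theory Defs
  imports "HOL-Analysis.Analysis" "HOL-Library.Extended_Real"
begin

fun dderiv :: "('e::euclidean_space \<Rightarrow> complex) \<Rightarrow> 'e list \<Rightarrow> 'e \<Rightarrow> complex" where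
  "dderiv f [] = f"
| "dderiv f (v # vs) = (\<lambda>z. frechet_derivative (dderiv f vs) (at z) v)"

definition smooth_fn :: "('e::euclidean_space \<Rightarrow> complex) \<Rightarrow> bool" where
  "smooth_fn f \<longleftrightarrow> (\<forall>vs z. dderiv f vs differentiable (at z))"

definition tsupp :: "('e::euclidean_space \<Rightarrow> complex) \<Rightarrow> 'e set" where
  "tsupp f = closure {z. f z \<noteq> 0}"

definition test_fn :: "('e::euclidean_space \<Rightarrow> complex) \<Rightarrow> bool" where
  "test_fn f \<longleftrightarrow> smooth_fn f \<and> compact (tsupp f)"

definition bounded_testset :: "('e::euclidean_space \<Rightarrow> complex) set \<Rightarrow> bool" where
  "bounded_testset B \<longleftrightarrow>
     (\<forall>f\<in>B. test_fn f) \<and>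
     (\<exists>K. compact K \<and> (\<forall>f\<in>B. tsupp f \<subseteq> K)) \<and>
     (\<forall>n. \<exists>C. \<forall>f\<in>B. \<forall>vs z. length vs = n \<and> (\<forall>v\<in>set vs. norm v \<le> 1)
                 \<longrightarrow> norm (dderiv f vs z) \<le> C)"

definition closed_cone :: "'e::euclidean_space set \<Rightarrow> bool" where
  "closed_cone V \<longleftrightarrow> closed V \<and> (\<forall>v\<in>V. \<forall>t>0. t *\<^sub>R v \<in> V)"

text \<open>Points of the cotangent bundle
  are pairs (point, covector), covectors identified with vectors via the inner
  product; the Fourier transform of F l times chi at xi is F l applied to
  chi(w) e^{-i xi.w}.\<close>
definition bounded_in_DGamma ::
  "('e::euclidean_space \<times> 'e) set \<Rightarrow> ('i \<Rightarrow> ('e \<Rightarrow> complex) \<Rightarrow> complex) \<Rightarrow> 'i set \<Rightarrow> bool" where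
  "bounded_in_DGamma \<Gamma> F L \<longleftrightarrow>
     (\<forall>l\<in>L. \<forall>f g a b. test_fn f \<and> test_fn g \<longrightarrow>
          F l (\<lambda>w. a * f w + b * g w) = a * F l f + b * F l g) \<and>
     (\<forall>B. bounded_testset B \<longrightarrow> (\<exists>C. \<forall>l\<in>L. \<forall>f\<in>B. norm (F l f) \<le> C)) \<and>
     (\<forall>N::nat. \<forall>chi V. test_fn chi \<and> closed_cone V \<and> (tsupp chi \<times> V) \<inter> \<Gamma> = {} \<longrightarrow>
        (\<exists>C. \<forall>l\<in>L. \<forall>\<xi>\<in>V.
            (1 + norm \<xi>) ^ N * norm (F l (\<lambda>w. chi w * cis (- (\<xi> \<bullet> w)))) \<le> C))"

definition escale :: "ereal \<Rightarrow> real" where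
  "escale l = (if l = \<infinity> then 0 else exp (- real_of_ereal l))"

definition dil :: "ereal \<Rightarrow> ('a::euclidean_space \<times> 'b::euclidean_space \<times> 'c::euclidean_space)
                    \<Rightarrow> 'a \<times> 'b \<times> 'c" where
  "dil l z = (fst z, escale l *\<^sub>R fst (snd z), (escale l)\<^sup>2 *\<^sub>R snd (snd z))"

definition delta_fam :: "ereal \<Rightarrow> ((('a::euclidean_space \<times> 'b::euclidean_space \<times> 'c::euclidean_space)
      \<times> ('a \<times> 'b \<times> 'c)) \<Rightarrow> complex) \<Rightarrow> complex" where
  "delta_fam l \<phi> = integral\<^sup>L lborel (\<lambda>z. \<phi> (z, dil l z))"

text \<open>Gamma_rho, parametrised by mu = e^{l rho} lambda (so lambda = e^{-l rho} mu),
  which makes sense also at l = +infinity; zero covectors excluded.\<close>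
definition Gamma_rho :: "((('a::euclidean_space \<times> 'b::euclidean_space \<times> 'c::euclidean_space)
      \<times> ('a \<times> 'b \<times> 'c)) \<times> (('a \<times> 'b \<times> 'c) \<times> ('a \<times> 'b \<times> 'c))) set" where
  "Gamma_rho = {((z, dil l z), (dil l \<mu>, \<mu>)) | l z \<mu>. 1 \<le> l \<and> \<mu> \<noteq> 0}"

text \<open>Kernel sign convention: Gamma' = {((z,z'),(xi,-eta)) | ((z,z'),(xi,eta)) in Gamma}.\<close>
definition twist :: "(('e::euclidean_space \<times> 'e) \<times> ('e \<times> 'e)) set \<Rightarrow> (('e \<times> 'e) \<times> ('e \<times> 'e)) set" where
  "twist G = {(p, (\<xi>, - \<eta>)) | p \<xi> \<eta>. (p, (\<xi>, \<eta>)) \<in> G}"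

end

theory Submission
  imports Defs
begin

text \<open>
  Write \<open>D\<^sub>e\<close> for \<open>e\<^sup>-\<^sup>l\<^sup>\<rho>\<close> with \<open>e = e\<^sup>-\<^sup>l \<in> [0, e\<^sup>-\<^sup>1]\<close> (and \<open>e = 0\<close> for
  \<open>l = \<infinity>\<close>). Since \<open>D\<^sub>e\<close> is self-adjoint, the localised Fourier transform of
  \<open>\<delta>(z' - D\<^sub>e z)\<close> at \<open>(\<xi>, \<eta>)\<close> is the Fourier transform of \<open>g\<^sub>e(z) = \<chi>(z, D\<^sub>e z)\<close>
  at \<open>u = \<xi> + D\<^sub>e \<eta>\<close>, and since \<open>D\<^sub>e\<close> is a contraction the \<open>g\<^sub>e\<close> form a bounded family
  of test functions. That \<open>supp \<chi> \<times> V\<close> misses the twisted \<open>\<Gamma>\<^sub>\<rho>\<close> says exactly that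
  \<open>u \<noteq> 0\<close> for nonzero \<open>(\<xi>, \<eta>) \<in> V\<close>; compactness of the parameters and homogeneity
  in \<open>(\<xi>, \<eta>)\<close> upgrade this to \<open>|u| \<ge> c |(\<xi>, \<eta>)|\<close>, so the seminorm bounds follow
  from rapid decay of the Fourier transforms of the \<open>g\<^sub>e\<close>, uniformly in \<open>e\<close>.

  The decay is proved without integration by parts: a shift by \<open>d = \<pi> u / |u|\<^sup>2\<close> flips
  the sign of \<open>e\<^sup>-\<^sup>i\<^sup>u\<^sup>z\<close>, so the finite difference \<open>g(z) - g(z + d)\<close> doubles the Fourier
  integral at \<open>u\<close>, while by the mean value theorem \<open>N\<close> such differences are bounded by
  \<open>N\<close>-th derivatives of \<open>g\<close> times \<open>|d|\<^sup>N = (\<pi> / |u|)\<^sup>N\<close>.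
\<close>

section \<open>Smooth functions and test functions\<close>

lemma smooth_fn_has_derivative:
  assumes "smooth_fn f"
  shows "(dderiv f vs has_derivative frechet_derivative (dderiv f vs) (at z)) (at z)"
  using assms unfolding smooth_fn_def by (simp add: frechet_derivative_works)

lemma smooth_fn_continuous_dderiv:
  assumes "smooth_fn f"
  shows "continuous_on UNIV (dderiv f vs)"
  using assms unfolding smooth_fn_def
  by (meson continuous_at_imp_continuous_on differentiable_imp_continuous_within)

lemma smooth_fn_continuous: "smooth_fn f \<Longrightarrow> continuous_on UNIV f"
  using smooth_fn_continuous_dderiv[of f "[]"] by simp

lemma dderiv_Cons_eq:
  assumes "(dderiv f vs has_derivative D) (at z)"
  shows "dderiv f (v # vs) z = D v"
proof -
  from assms have "D = frechet_derivative (dderiv f vs) (at z)"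
    by (rule frechet_derivative_at)
  then show ?thesis by simp
qed

lemma linear_dderiv_direction:
  assumes "smooth_fn f"
  shows "linear (\<lambda>v. dderiv f (pre @ v # post) z)"
  using assms
proof (induction pre arbitrary: z)
  case Nil
  then show ?case
    using smooth_fn_has_derivative[OF Nil, of post z]
    by (simp add: has_derivative_bounded_linear bounded_linear.linear)
next
  case (Cons p pre)
  let ?H = "\<lambda>v. dderiv f (pre @ v # post)"
  have lin: "\<And>z. linear (\<lambda>v. ?H v z)" using Cons by blast
  have D: "\<And>v z. (?H v has_derivative frechet_derivative (?H v) (at z)) (at z)"
    using smooth_fn_has_derivative[OF Cons.prems] by blast
  show ?case
  proof (rule linearI)
    fix x y
    have "?H (x + y) = (\<lambda>z. ?H x z + ?H y z)"
      by (rule ext) (simp add: linear_add[OF lin])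
    then have "(?H (x + y) has_derivative
        (\<lambda>v. frechet_derivative (?H x) (at z) v + frechet_derivative (?H y) (at z) v)) (at z)"
      by (simp add: has_derivative_add D)
    then show "dderiv f ((p # pre) @ (x + y) # post) z
        = dderiv f ((p # pre) @ x # post) z + dderiv f ((p # pre) @ y # post) z"
      using dderiv_Cons_eq by simp
  next
    fix c x
    have "?H (c *\<^sub>R x) = (\<lambda>z. c *\<^sub>R ?H x z)"
      by (rule ext) (simp add: linear_scale[OF lin])
    then have "(?H (c *\<^sub>R x) has_derivative
        (\<lambda>v. c *\<^sub>R frechet_derivative (?H x) (at z) v)) (at z)"
      by (simp add: has_derivative_scaleR_right D)
    then show "dderiv f ((p # pre) @ (c *\<^sub>R x) # post) z
        = c *\<^sub>R dderiv f ((p # pre) @ x # post) z"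
      using dderiv_Cons_eq by simp
  qed
qed

lemma eq_0_outside_tsupp: "z \<notin> tsupp f \<Longrightarrow> f z = 0"
  unfolding tsupp_def using closure_subset[of "{z. f z \<noteq> 0}"] by auto

lemma dderiv_eq_0_outside_tsupp:
  assumes "z \<notin> tsupp f"
  shows "dderiv f vs z = 0"
  using assms
proof (induction vs arbitrary: z)
  case Nil
  then show ?case by (simp add: eq_0_outside_tsupp)
next
  case (Cons v vs)
  have "open (- tsupp f)" unfolding tsupp_def by auto
  then have "(dderiv f vs has_derivative (\<lambda>_. 0)) (at z)"
    by (rule has_derivative_transform_within_open[OF has_derivative_const])
      (use Cons in auto)
  then show ?case by (rule dderiv_Cons_eq)
qed

lemma test_fn_tsupp_bounded:
  assumes "test_fn f"
  obtains R where "R \<ge> 0" "\<And>p. p \<in> tsupp f \<Longrightarrow> norm p \<le> R"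
proof -
  obtain R where "\<And>p. p \<in> tsupp f \<Longrightarrow> norm p \<le> R"
    using assms unfolding test_fn_def by (meson bounded_iff compact_imp_bounded)
  then show ?thesis
    using that[of "max R 0"] by force
qed

lemma test_fn_dderiv_basis_bounded:
  fixes f :: "'e::euclidean_space \<Rightarrow> complex"
  assumes "test_fn f"
  obtains B where "B \<ge> 0"
    "\<And>bs z. set bs \<subseteq> Basis \<Longrightarrow> length bs = n \<Longrightarrow> norm (dderiv f bs z) \<le> B"
proof -
  have sm: "smooth_fn f" and cp: "compact (tsupp f)"
    using assms unfolding test_fn_def by auto
  let ?S = "{bs. set bs \<subseteq> (Basis::'e set) \<and> length bs = n}"
  have "bounded (range (dderiv f bs))" for bs
  proof -
    have "bounded (dderiv f bs ` tsupp f)"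
      by (intro compact_imp_bounded compact_continuous_image cp
          continuous_on_subset[OF smooth_fn_continuous_dderiv[OF sm]]) auto
    moreover have "range (dderiv f bs) \<subseteq> insert 0 (dderiv f bs ` tsupp f)"
      using dderiv_eq_0_outside_tsupp by blast
    ultimately show ?thesis
      by (metis bounded_insert bounded_subset)
  qed
  moreover have "finite ?S" by (rule finite_lists_length_eq) simp
  ultimately have "bounded (\<Union>bs\<in>?S. range (dderiv f bs))"
    by (simp add: bounded_UN)
  then obtain B where "B > 0" "\<And>x. x \<in> (\<Union>bs\<in>?S. range (dderiv f bs)) \<Longrightarrow> norm x \<le> B"
    by (meson bounded_pos)
  then show ?thesis using that[of B] by auto
qed

text \<open>Expanding each direction in the standard basis costs a factor \<open>DIM('e) * r\<close>.\<close>

lemma norm_dderiv_le_basis_bound: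
  fixes f :: "'e::euclidean_space \<Rightarrow> complex"
  assumes sm: "smooth_fn f"
    and B: "\<And>bs z. set bs \<subseteq> Basis \<Longrightarrow> length bs = n \<Longrightarrow> norm (dderiv f bs z) \<le> B"
    and "B \<ge> 0" "r \<ge> 0" "length vs = n" "\<And>v. v \<in> set vs \<Longrightarrow> norm v \<le> r"
  shows "norm (dderiv f vs z) \<le> (real DIM('e) * r) ^ n * B"
proof -
  have "norm (dderiv f (ws @ bs) z) \<le> (real DIM('e) * r) ^ length ws * B"
    if "set bs \<subseteq> Basis" "length ws + length bs = n" "\<forall>v\<in>set ws. norm v \<le> r" for ws bs
    using that
  proof (induction ws arbitrary: bs rule: rev_induct)
    case Nil
    then show ?case using B by simp
  next
    case (snoc v ws)
    have lin: "linear (\<lambda>v. dderiv f (ws @ v # bs) z)"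
      by (rule linear_dderiv_direction[OF sm])
    have "dderiv f (ws @ v # bs) z = dderiv f (ws @ (\<Sum>b\<in>Basis. (v \<bullet> b) *\<^sub>R b) # bs) z"
      by (simp add: euclidean_representation)
    also have "\<dots> = (\<Sum>b\<in>Basis. (v \<bullet> b) *\<^sub>R dderiv f (ws @ b # bs) z)"
      by (simp add: linear_sum[OF lin] linear_scale[OF lin])
    finally have "norm (dderiv f (ws @ v # bs) z)
        \<le> (\<Sum>b\<in>Basis. norm ((v \<bullet> b) *\<^sub>R dderiv f (ws @ b # bs) z))"
      by (metis norm_sum)
    also have "\<dots> \<le> (\<Sum>b\<in>(Basis::'e set). r * ((real DIM('e) * r) ^ length ws * B))"
    proof (rule sum_mono)
      fix b :: 'e assume b: "b \<in> Basis"
      have "norm (dderiv f (ws @ [b] @ bs) z) \<le> (real DIM('e) * r) ^ length ws * B"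
        using snoc.prems b by (intro snoc.IH) auto
      moreover have "\<bar>v \<bullet> b\<bar> \<le> r"
        using Basis_le_norm[OF b, of v] snoc.prems(3) by simp
      ultimately show "norm ((v \<bullet> b) *\<^sub>R dderiv f (ws @ b # bs) z)
          \<le> r * ((real DIM('e) * r) ^ length ws * B)"
        using \<open>B \<ge> 0\<close> \<open>r \<ge> 0\<close> by (simp add: mult_mono')
    qed
    also have "\<dots> = (real DIM('e) * r) ^ length (ws @ [v]) * B"
      by (simp add: algebra_simps)
    finally show ?case by simp
  qed
  from this[of "[]" vs] show ?thesis using assms(5,6) by simp
qed

lemma test_fn_dderiv_bound:
  fixes f :: "'e::euclidean_space \<Rightarrow> complex"
  assumes "test_fn f"
  obtains B where "B \<ge> 0"
    "\<And>r vs z. r \<ge> 0 \<Longrightarrow> length vs = n \<Longrightarrow> (\<And>v. v \<in> set vs \<Longrightarrow> norm v \<le> r) \<Longrightarrow>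
       norm (dderiv f vs z) \<le> (real DIM('e) * r) ^ n * B"
proof -
  obtain B where B: "B \<ge> 0"
      "\<And>bs z. set bs \<subseteq> Basis \<Longrightarrow> length bs = n \<Longrightarrow> norm (dderiv f bs z) \<le> B"
    using test_fn_dderiv_basis_bounded[OF assms] by blast
  have "smooth_fn f" using assms unfolding test_fn_def by auto
  show ?thesis
    by (rule that[OF B(1) norm_dderiv_le_basis_bound[OF \<open>smooth_fn f\<close> B(2) B(1)]])
qed

lemma dderiv_compose_linear:
  assumes sm: "smooth_fn f" and L: "bounded_linear L"
  shows "dderiv (\<lambda>z. f (L z)) vs = (\<lambda>z. dderiv f (map L vs) (L z))"
proof (induction vs)
  case Nil
  then show ?case by simp
next
  case (Cons v vs)
  have "(dderiv (\<lambda>z. f (L z)) vs has_derivative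
      (frechet_derivative (dderiv f (map L vs)) (at (L z)) \<circ> L)) (at z)" for z
    using diff_chain_at[OF bounded_linear_imp_has_derivative[OF L] smooth_fn_has_derivative[OF sm]]
    by (simp add: Cons comp_def)
  then have "dderiv (\<lambda>z. f (L z)) (v # vs) z
      = (frechet_derivative (dderiv f (map L vs)) (at (L z)) \<circ> L) v" for z
    by (rule dderiv_Cons_eq)
  then show ?case by (simp add: fun_eq_iff)
qed

lemma smooth_fn_compose_linear:
  assumes sm: "smooth_fn f" and L: "bounded_linear L"
  shows "smooth_fn (\<lambda>z. f (L z))"
  unfolding smooth_fn_def dderiv_compose_linear[OF assms]
proof (intro allI)
  fix vs z
  have "((dderiv f (map L vs) \<circ> L) has_derivative
      (frechet_derivative (dderiv f (map L vs)) (at (L z)) \<circ> L)) (at z)"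
    by (rule diff_chain_at[OF bounded_linear_imp_has_derivative[OF L] smooth_fn_has_derivative[OF sm]])
  then show "(\<lambda>z. dderiv f (map L vs) (L z)) differentiable at z"
    unfolding comp_def differentiable_def by blast
qed

lemma norm_dderiv_compose_linear_le:
  assumes "smooth_fn f" "bounded_linear L" "K \<ge> 0" "\<And>v. norm (L v) \<le> K * norm v"
    and bound: "\<And>r vs z. r \<ge> 0 \<Longrightarrow> length vs = N \<Longrightarrow> (\<And>v. v \<in> set vs \<Longrightarrow> norm v \<le> r) \<Longrightarrow>
       norm (dderiv f vs z) \<le> (A * r) ^ N * B"
    and r: "r \<ge> 0" "length vs = N" "\<And>v. v \<in> set vs \<Longrightarrow> norm v \<le> r"
  shows "norm (dderiv (\<lambda>z. f (L z)) vs y) \<le> (A * K * r) ^ N * B"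
proof -
  have "norm w \<le> K * r" if w: "w \<in> set (map L vs)" for w
  proof -
    obtain v where "v \<in> set vs" "w = L v"
      using w by auto
    then show ?thesis
      using assms(4)[of v] r(3)[of v] mult_left_mono[OF _ \<open>K \<ge> 0\<close>] by fastforce
  qed
  then have "norm (dderiv f (map L vs) (L y)) \<le> (A * (K * r)) ^ N * B"
    using bound[of "K * r" "map L vs"] r(1,2) \<open>K \<ge> 0\<close> by simp
  then show ?thesis
    by (simp add: dderiv_compose_linear[OF assms(1,2)] mult.assoc)
qed

section \<open>Integrals of compactly supported functions\<close>

lemma integrable_vanishing_outside:
  fixes h :: "'e::euclidean_space \<Rightarrow> complex"
  assumes "continuous_on UNIV h" and "\<And>z. R < norm z \<Longrightarrow> h z = 0"
  shows "integrable lborel h"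
proof -
  have "integrable lborel (\<lambda>x. indicator (cball 0 R) x *\<^sub>R h x)"
    by (rule borel_integrable_compact) (auto intro: continuous_on_subset[OF assms(1)])
  moreover have "(\<lambda>x. indicator (cball 0 R) x *\<^sub>R h x) = h"
    using assms(2) by (auto simp: indicator_def fun_eq_iff)
  ultimately show ?thesis by simp
qed

lemma norm_integral_vanishing_outside_le:
  fixes h :: "'e::euclidean_space \<Rightarrow> complex"
  assumes "continuous_on UNIV h" and "\<And>z. R < norm z \<Longrightarrow> h z = 0"
    and "\<And>z. norm (h z) \<le> M"
  shows "norm (integral\<^sup>L lborel h) \<le> M * measure lborel (cball (0::'e) R)"
proof -
  have "integrable lborel (indicator (cball (0::'e) R) :: 'e \<Rightarrow> real)"
    using emeasure_bounded_finite[OF bounded_cball[of 0 R]]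
    by (subst integrable_indicator_iff) auto
  moreover have "norm (h x) \<le> M * indicator (cball (0::'e) R) x" for x
    using assms(2,3)[of x] by (auto simp: indicator_def)
  ultimately have "integral\<^sup>L lborel (\<lambda>x. norm (h x))
      \<le> integral\<^sup>L lborel (\<lambda>x. M * indicator (cball (0::'e) R) x)"
    by (intro integral_mono integrable_norm integrable_vanishing_outside[OF assms(1,2)]) auto
  then have "norm (integral\<^sup>L lborel h) \<le> integral\<^sup>L lborel (\<lambda>x. M * indicator (cball (0::'e) R) x)"
    using integral_norm_bound[of lborel h] by linarith
  then show ?thesis by simp
qed

lemma continuous_on_cis_inner: "continuous_on UNIV (\<lambda>z. cis (- (u \<bullet> z)))"
  unfolding cis_conv_exp by (intro continuous_intros)

section \<open>Decay of Fourier integrals\<close>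

definition fdiff :: "'e::euclidean_space \<Rightarrow> ('e \<Rightarrow> complex) \<Rightarrow> 'e \<Rightarrow> complex" where
  "fdiff s h = (\<lambda>z. h z - h (z + s))"

lemma has_derivative_fdiff:
  assumes "\<And>y. (h has_derivative D y) (at y)"
  shows "(fdiff s h has_derivative (\<lambda>v. D z v - D (z + s) v)) (at z)"
proof -
  have "((\<lambda>z. z + s) has_derivative id) (at z)"
    using has_derivative_add_const[OF has_derivative_ident] by (simp add: id_def)
  from diff_chain_at[OF this assms] have "((\<lambda>z. h (z + s)) has_derivative D (z + s)) (at z)"
    by (simp add: comp_def id_def)
  then show ?thesis
    unfolding fdiff_def by (intro has_derivative_diff assms)
qed

lemma dderiv_fdiff:
  assumes "smooth_fn h"
  shows "dderiv (fdiff s h) vs = fdiff s (dderiv h vs)"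
proof (induction vs)
  case Nil
  then show ?case by simp
next
  case (Cons v vs)
  have D: "(dderiv (fdiff s h) vs has_derivative (\<lambda>v. frechet_derivative (dderiv h vs) (at z) v
      - frechet_derivative (dderiv h vs) (at (z + s)) v)) (at z)" for z
    unfolding Cons by (rule has_derivative_fdiff[OF smooth_fn_has_derivative[OF assms]])
  have "dderiv (fdiff s h) (v # vs) z = fdiff s (dderiv h (v # vs)) z" for z
    using dderiv_Cons_eq[OF D[of z], of v] by (simp add: fdiff_def)
  then show ?case by (simp add: fun_eq_iff)
qed

lemma smooth_fn_fdiff:
  assumes "smooth_fn h"
  shows "smooth_fn (fdiff s h)"
  unfolding smooth_fn_def dderiv_fdiff[OF assms] differentiable_def
  using has_derivative_fdiff[OF smooth_fn_has_derivative[OF assms]] by blast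

lemma norm_fdiff_le:
  fixes h :: "'e::euclidean_space \<Rightarrow> complex"
  assumes D: "\<And>y. (h has_derivative D y) (at y)" and M: "\<And>y. norm (D y s) \<le> M"
  shows "norm (fdiff s h z) \<le> M"
proof -
  define \<phi> where "\<phi> t = h (z + t *\<^sub>R s)" for t :: real
  have d\<phi>: "(\<phi> has_derivative (\<lambda>t. D (z + x *\<^sub>R s) (t *\<^sub>R s))) (at x)" for x
  proof -
    have "((\<lambda>t. z + t *\<^sub>R s) has_derivative (\<lambda>t. t *\<^sub>R s)) (at x)"
      by (auto intro!: derivative_eq_intros)
    from diff_chain_at[OF this D] show ?thesis
      by (simp add: \<phi>_def[abs_def] comp_def)
  qed
  then have "continuous_on {0..1} \<phi>"
    by (intro continuous_at_imp_continuous_on ballI has_derivative_continuous) blast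
  then obtain x where "norm (\<phi> 1 - \<phi> 0) \<le> norm (D (z + x *\<^sub>R s) s)"
    using mvt_general[of 0 1 \<phi>, OF _ _ d\<phi>] by auto
  moreover have "fdiff s h z = \<phi> 0 - \<phi> 1"
    by (simp add: fdiff_def \<phi>_def)
  ultimately have "norm (fdiff s h z) \<le> norm (D (z + x *\<^sub>R s) s)"
    by (simp add: norm_minus_commute)
  also have "\<dots> \<le> M" by (rule M)
  finally show ?thesis .
qed

lemma norm_fdiff_iterate_le:
  fixes h :: "'e::euclidean_space \<Rightarrow> complex"
  assumes "smooth_fn h" and "\<And>y. norm (dderiv h (replicate N s) y) \<le> M"
  shows "norm ((fdiff s ^^ N) h z) \<le> M"
  using assms
proof (induction N arbitrary: h)
  case 0
  then show ?case by simp
next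
  case (Suc N)
  have "norm (dderiv (fdiff s h) (replicate N s) y) \<le> M" for y
    unfolding dderiv_fdiff[OF Suc.prems(1)]
    by (rule norm_fdiff_le[OF smooth_fn_has_derivative[OF Suc.prems(1)]])
      (use Suc.prems(2) in simp)
  then have "norm ((fdiff s ^^ N) (fdiff s h) z) \<le> M"
    by (rule Suc.IH[OF smooth_fn_fdiff[OF Suc.prems(1)]])
  then show ?case by (simp only: funpow_Suc_right comp_apply)
qed

lemma fdiff_vanishes_outside:
  assumes "\<And>z. R < norm z \<Longrightarrow> h z = 0" and "R + norm s < norm z"
  shows "fdiff s h z = 0"
proof -
  have "norm z \<le> norm (z + s) + norm s"
    using norm_triangle_ineq4[of "z + s" s] by simp
  then have "R < norm z" "R < norm (z + s)"
    using assms(2) norm_ge_zero[of s] by linarith+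
  then show ?thesis by (simp add: fdiff_def assms(1))
qed

lemma integral_fdiff_cis:
  fixes h :: "'e::euclidean_space \<Rightarrow> complex"
  assumes c: "continuous_on UNIV h" and s: "\<And>z. R < norm z \<Longrightarrow> h z = 0"
    and ud: "u \<bullet> d = pi"
  shows "integral\<^sup>L lborel (\<lambda>z. fdiff d h z * cis (- (u \<bullet> z)))
       = 2 * integral\<^sup>L lborel (\<lambda>z. h z * cis (- (u \<bullet> z)))"
proof -
  define k where "k z = h z * cis (- (u \<bullet> z))" for z
  have k_cont: "continuous_on UNIV k"
    unfolding k_def by (intro continuous_intros c continuous_on_cis_inner)
  have "cis (- pi) = -1" by (simp add: complex_eq_iff)
  then have "cis (- (u \<bullet> (d + z))) = - cis (- (u \<bullet> z))" for z
    using cis_mult[of "- pi" "- (u \<bullet> z)"] ud by (simp add: inner_add_right algebra_simps)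
  then have shift: "h (z + d) * cis (- (u \<bullet> z)) = - k (d + z)" for z
    by (simp add: k_def add.commute[of z d])
  have "integral\<^sup>L lborel (\<lambda>z. k (d + z)) = integral\<^sup>L (distr lborel borel ((+) d)) k"
    using k_cont by (intro integral_distr[symmetric] borel_measurable_continuous_onI) auto
  then have "integral\<^sup>L lborel (\<lambda>z. k (d + z)) = integral\<^sup>L lborel k"
    by (simp add: lborel_distr_plus)
  moreover have "integrable lborel k"
    using s by (intro integrable_vanishing_outside[OF k_cont]) (auto simp: k_def)
  moreover have "k (d + z) = 0" if "R + norm d < norm z" for z
  proof -
    have "norm z \<le> norm (d + z) + norm d"
      using norm_triangle_ineq4[of "d + z" d] by simp
    then have "R < norm (d + z)" using that by linarith
    then show ?thesis by (simp add: k_def s)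
  qed
  then have "integrable lborel (\<lambda>z. k (d + z))"
    by (intro integrable_vanishing_outside[where R = "R + norm d"]
        continuous_on_compose2[OF k_cont]) (auto intro!: continuous_intros)
  ultimately show ?thesis
    by (simp add: fdiff_def left_diff_distrib shift k_def[symmetric])
qed

lemma fourier_integral_fdiff_bound:
  fixes g :: "'e::euclidean_space \<Rightarrow> complex"
  assumes sm: "smooth_fn g" and supp: "\<And>z. R < norm z \<Longrightarrow> g z = 0"
    and ud: "u \<bullet> d = pi" and M: "\<And>y. norm (dderiv g (replicate N d) y) \<le> M"
  shows "2 ^ N * norm (integral\<^sup>L lborel (\<lambda>z. g z * cis (- (u \<bullet> z))))
       \<le> M * measure lborel (cball (0::'e) (R + N * norm d))"
proof -
  define G where "G k = (fdiff d ^^ k) g" for k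
  have G: "smooth_fn (G k) \<and> (\<forall>z. R + k * norm d < norm z \<longrightarrow> G k z = 0)" for k
  proof (induction k)
    case 0
    then show ?case using sm supp by (simp add: G_def)
  next
    case (Suc k)
    then show ?case
      using fdiff_vanishes_outside[of "R + k * norm d" "G k" d]
      by (auto simp: G_def smooth_fn_fdiff algebra_simps)
  qed
  have "integral\<^sup>L lborel (\<lambda>z. G k z * cis (- (u \<bullet> z)))
      = 2 ^ k * integral\<^sup>L lborel (\<lambda>z. g z * cis (- (u \<bullet> z)))" for k
  proof (induction k)
    case 0
    then show ?case by (simp add: G_def)
  next
    case (Suc k)
    have "integral\<^sup>L lborel (\<lambda>z. fdiff d (G k) z * cis (- (u \<bullet> z)))
        = 2 * integral\<^sup>L lborel (\<lambda>z. G k z * cis (- (u \<bullet> z)))"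
      using G[of k] by (intro integral_fdiff_cis[OF smooth_fn_continuous _ ud]) auto
    then show ?case using Suc by (simp add: G_def)
  qed
  moreover have "norm (integral\<^sup>L lborel (\<lambda>z. G N z * cis (- (u \<bullet> z))))
      \<le> M * measure lborel (cball (0::'e) (R + N * norm d))"
    using G[of N] norm_fdiff_iterate_le[OF sm M]
    by (intro norm_integral_vanishing_outside_le continuous_on_mult
        smooth_fn_continuous continuous_on_cis_inner) (auto simp: G_def norm_mult)
  ultimately show ?thesis by (simp add: norm_mult norm_power)
qed

lemma fourier_integral_high_frequency_bound:
  fixes g :: "'e::euclidean_space \<Rightarrow> complex"
  assumes sm: "smooth_fn g" and supp: "\<And>z. R < norm z \<Longrightarrow> g z = 0"
    and "A \<ge> 0" "B \<ge> 0"
    and dB: "\<And>r vs y. r \<ge> 0 \<Longrightarrow> length vs = N \<Longrightarrow> (\<And>v. v \<in> set vs \<Longrightarrow> norm v \<le> r) \<Longrightarrow>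
               norm (dderiv g vs y) \<le> (A * r) ^ N * B"
    and u: "1 \<le> norm u"
  shows "(2 * norm u) ^ N * norm (integral\<^sup>L lborel (\<lambda>z. g z * cis (- (u \<bullet> z))))
       \<le> (A * pi) ^ N * B * measure lborel (cball (0::'e) (R + N * pi))"
    (is "_ * norm ?F \<le> ?C")
proof -
  define d where "d = (pi / (norm u)\<^sup>2) *\<^sub>R u"
  have "u \<noteq> 0" using u by auto
  then have ud: "u \<bullet> d = pi"
    by (simp add: d_def power2_norm_eq_inner[symmetric])
  have nd: "norm d = pi / norm u"
    using \<open>u \<noteq> 0\<close> by (simp add: d_def power2_eq_square)
  then have "norm d \<le> pi"
    using u by (simp add: divide_le_eq)
  have "2 ^ N * norm ?F \<le> (A * norm d) ^ N * B * measure lborel (cball (0::'e) (R + N * norm d))"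
    by (intro fourier_integral_fdiff_bound[OF sm supp ud] dB) auto
  also have "\<dots> \<le> (A * norm d) ^ N * B * measure lborel (cball (0::'e) (R + N * pi))"
    using \<open>norm d \<le> pi\<close> \<open>A \<ge> 0\<close> \<open>B \<ge> 0\<close>
    by (intro mult_left_mono measure_mono_fmeasurable fmeasurable_compact compact_cball
        subset_cball fmeasurableD) (auto intro: mult_left_mono)
  also have "\<dots> = ?C / norm u ^ N"
    by (simp add: nd power_mult_distrib power_divide)
  finally show ?thesis
    using \<open>u \<noteq> 0\<close> by (simp add: field_simps power_mult_distrib)
qed

lemma fourier_integral_decay:
  fixes g :: "'e::euclidean_space \<Rightarrow> complex"
  assumes sm: "smooth_fn g" and supp: "\<And>z. R < norm z \<Longrightarrow> g z = 0"
    and B0: "\<And>z. norm (g z) \<le> B0" and "A \<ge> 0" "B \<ge> 0"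
    and dB: "\<And>r vs y. r \<ge> 0 \<Longrightarrow> length vs = N \<Longrightarrow> (\<And>v. v \<in> set vs \<Longrightarrow> norm v \<le> r) \<Longrightarrow>
               norm (dderiv g vs y) \<le> (A * r) ^ N * B"
  shows "(1 + norm u) ^ N * norm (integral\<^sup>L lborel (\<lambda>z. g z * cis (- (u \<bullet> z))))
       \<le> 2 ^ N * (B0 * measure lborel (cball (0::'e) R))
         + (A * pi) ^ N * B * measure lborel (cball (0::'e) (R + N * pi))"
    (is "(1 + norm u) ^ N * norm ?F \<le> 2 ^ N * ?C0 + ?C1")
proof -
  have F0: "norm ?F \<le> ?C0"
    using supp B0 by (intro norm_integral_vanishing_outside_le continuous_on_mult
        smooth_fn_continuous[OF sm] continuous_on_cis_inner) (auto simp: norm_mult)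
  show ?thesis
  proof (cases "norm u \<le> 1")
    case True
    then have "(1 + norm u) ^ N \<le> 2 ^ N" by (intro power_mono) auto
    then have "(1 + norm u) ^ N * norm ?F \<le> 2 ^ N * ?C0"
      using F0 by (intro mult_mono) auto
    moreover have "?C1 \<ge> 0"
      using \<open>A \<ge> 0\<close> \<open>B \<ge> 0\<close> by simp
    ultimately show ?thesis by linarith
  next
    case False
    then have "(1 + norm u) ^ N \<le> (2 * norm u) ^ N"
      by (intro power_mono) auto
    then have "(1 + norm u) ^ N * norm ?F \<le> (2 * norm u) ^ N * norm ?F"
      by (rule mult_right_mono) simp
    also have "\<dots> \<le> ?C1"
      using False by (intro fourier_integral_high_frequency_bound[OF sm supp \<open>A \<ge> 0\<close> \<open>B \<ge> 0\<close> dB]) auto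
    moreover have "0 \<le> ?C0"
      using F0 norm_ge_zero[of ?F] by linarith
    then have "0 \<le> 2 ^ N * ?C0" by simp
    ultimately show ?thesis by linarith
  qed
qed

section \<open>Lower bounds on cones\<close>

lemma compact_pos_lower_bound:
  fixes f :: "'a::topological_space \<Rightarrow> real"
  assumes "compact S" "continuous_on S f" "\<And>x. x \<in> S \<Longrightarrow> 0 < f x"
  obtains c where "c > 0" "\<And>x. x \<in> S \<Longrightarrow> c \<le> f x"
proof (cases "S = {}")
  case True
  then show ?thesis using that[of 1] by simp
next
  case False
  then obtain x0 where "x0 \<in> S" "\<And>x. x \<in> S \<Longrightarrow> f x0 \<le> f x"
    using continuous_attains_inf[OF assms(1) False assms(2)] by blast
  then show ?thesis
    using that[of "f x0"] assms(3) by blast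
qed

lemma compact_cone_lower_bound:
  fixes A :: "'p::topological_space \<Rightarrow> 'v::euclidean_space \<Rightarrow> 'w::real_normed_vector"
  assumes "compact K" and V: "closed_cone V"
    and cont: "continuous_on (K \<times> V) (\<lambda>(p, w). A p w)"
    and lin: "\<And>p. p \<in> K \<Longrightarrow> linear (A p)"
    and nz: "\<And>p w. p \<in> K \<Longrightarrow> w \<in> V \<Longrightarrow> w \<noteq> 0 \<Longrightarrow> A p w \<noteq> 0"
  obtains c where "c > 0" "\<And>p w. p \<in> K \<Longrightarrow> w \<in> V \<Longrightarrow> c * norm w \<le> norm (A p w)"
proof -
  define S where "S = K \<times> (V \<inter> sphere 0 1)"
  have "compact S"
    using V \<open>compact K\<close> unfolding S_def closed_cone_def
    by (intro compact_Times closed_Int_compact compact_sphere) auto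
  have "S \<subseteq> K \<times> V"
    unfolding S_def by auto
  from continuous_on_norm[OF continuous_on_subset[OF cont this]]
  have S_cont: "continuous_on S (\<lambda>q. norm (A (fst q) (snd q)))"
    by (simp add: split_beta)
  have S_pos: "0 < norm (A (fst q) (snd q))" if "q \<in> S" for q
  proof -
    have "fst q \<in> K" "snd q \<in> V" "snd q \<noteq> 0"
      using that by (auto simp: S_def)
    then show ?thesis using nz by simp
  qed
  obtain c where c: "c > 0" "\<And>q. q \<in> S \<Longrightarrow> c \<le> norm (A (fst q) (snd q))"
    using compact_pos_lower_bound[OF \<open>compact S\<close> S_cont S_pos] by blast
  show ?thesis
  proof (rule that[OF c(1)])
    fix p w
    assume p: "p \<in> K" and w: "w \<in> V"
    show "c * norm w \<le> norm (A p w)"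
    proof (cases "w = 0")
      case True
      then show ?thesis by simp
    next
      case False
      then have "(p, (1 / norm w) *\<^sub>R w) \<in> S"
        using p w V by (simp add: S_def closed_cone_def)
      then have "c \<le> norm (A p ((1 / norm w) *\<^sub>R w))"
        using c(2) by fastforce
      also have "\<dots> = norm (A p w) / norm w"
        by (simp add: linear_scale[OF lin[OF p]])
      finally show ?thesis
        using False by (simp add: field_simps)
    qed
  qed
qed

lemma one_add_power_le_of_mult_le:
  fixes x y c :: real
  assumes "c > 0" "0 \<le> x" "c * x \<le> y"
  shows "(1 + x) ^ N \<le> (1 + 1 / c) ^ N * (1 + y) ^ N"
proof -
  have "0 \<le> y"
    using assms mult_nonneg_nonneg[of c x] by linarith
  have "x \<le> (1 + y) / c"
    using assms by (simp add: field_simps)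
  moreover have "(1 + 1 / c) * (1 + y) = 1 + y + (1 + y) / c"
    using assms(1) by (simp add: field_simps)
  ultimately have "(1 + x) ^ N \<le> ((1 + 1 / c) * (1 + y)) ^ N"
    using \<open>0 \<le> y\<close> assms(2) by (intro power_mono) auto
  then show ?thesis
    by (simp add: power_mult_distrib)
qed

section \<open>The dilations\<close>

definition dilation :: "real \<Rightarrow> ('a::euclidean_space \<times> 'b::euclidean_space \<times> 'c::euclidean_space)
    \<Rightarrow> 'a \<times> 'b \<times> 'c" where
  "dilation e z = (fst z, e *\<^sub>R fst (snd z), e\<^sup>2 *\<^sub>R snd (snd z))"

lemma dil_eq_dilation: "dil l = dilation (escale l)"
  by (simp add: fun_eq_iff dil_def dilation_def)

lemma escale_bounds:
  assumes "1 \<le> l"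
  shows "0 \<le> escale l" "escale l \<le> exp (-1)"
proof -
  have "l = \<infinity> \<or> (\<exists>r. l = ereal r \<and> 1 \<le> r)"
    using assms by (cases l) auto
  then show "0 \<le> escale l" "escale l \<le> exp (-1)"
    by (auto simp: escale_def)
qed

lemma escale_le_1:
  assumes "1 \<le> l"
  shows "escale l \<le> 1"
proof -
  have "exp (-1::real) \<le> 1" by simp
  then show ?thesis using escale_bounds(2)[OF assms] by linarith
qed

lemma escale_surj:
  assumes "0 \<le> e" "e \<le> exp (-1)"
  obtains l where "1 \<le> l" "escale l = e"
proof (cases "e = 0")
  case True
  then show ?thesis using that[of \<infinity>] by (simp add: escale_def)
next
  case False
  with assms have "0 < e" by simp
  with assms have "ln e \<le> -1"
    using ln_le_cancel_iff[of e "exp (-1)"] by simp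
  with \<open>0 < e\<close> show ?thesis
    using that[of "ereal (- ln e)"] by (simp add: escale_def)
qed

lemma bounded_linear_dilation: "bounded_linear (dilation e)"
  unfolding dilation_def by (intro bounded_linear_intros)

lemma norm_dilation_le:
  assumes "\<bar>e\<bar> \<le> 1"
  shows "norm (dilation e z) \<le> norm z"
proof -
  obtain a b c where z: "z = (a, b, c)" by (cases z) auto
  have "norm (e *\<^sub>R b) \<le> norm b" "norm (e\<^sup>2 *\<^sub>R c) \<le> norm c"
    using assms abs_square_le_1[of e] by (simp_all add: mult_left_le_one_le)
  then have "(norm (e *\<^sub>R b))\<^sup>2 \<le> (norm b)\<^sup>2" "(norm (e\<^sup>2 *\<^sub>R c))\<^sup>2 \<le> (norm c)\<^sup>2"
    by (auto intro!: power_mono)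
  moreover have "(norm (dilation e z))\<^sup>2 = (norm a)\<^sup>2 + ((norm (e *\<^sub>R b))\<^sup>2 + (norm (e\<^sup>2 *\<^sub>R c))\<^sup>2)"
    by (simp add: z dilation_def norm_Pair del: norm_scaleR)
  moreover have "(norm z)\<^sup>2 = (norm a)\<^sup>2 + ((norm b)\<^sup>2 + (norm c)\<^sup>2)"
    by (simp add: z norm_Pair)
  ultimately have "(norm (dilation e z))\<^sup>2 \<le> (norm z)\<^sup>2"
    by linarith
  then show ?thesis
    by (rule power2_le_imp_le) simp
qed

lemma inner_dilation_commute: "x \<bullet> dilation e z = dilation e x \<bullet> z"
  by (simp add: dilation_def inner_prod_def)

lemma bounded_linear_dilation_graph: "bounded_linear (\<lambda>z. (z, dilation e z))"
  by (intro bounded_linear_Pair bounded_linear_ident bounded_linear_dilation)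

lemma norm_dilation_graph_le:
  assumes "\<bar>e\<bar> \<le> 1"
  shows "norm (z, dilation e z) \<le> 2 * norm z"
  using norm_Pair_le[of z "dilation e z"] norm_dilation_le[OF assms, of z] by simp

lemma inner_dilation_graph: "\<xi> \<bullet> (z, dilation e z) = (fst \<xi> + dilation e (snd \<xi>)) \<bullet> z"
  by (cases \<xi>) (simp add: inner_add_left inner_dilation_commute)

lemma compact_dilation_graph_vimage:
  fixes S :: "(('a::euclidean_space \<times> 'b::euclidean_space \<times> 'c::euclidean_space) \<times> ('a \<times> 'b \<times> 'c)) set"
  assumes "compact E" "compact S"
  shows "compact {(e, z). e \<in> E \<and> (z, dilation e z) \<in> S}"
proof -
  let ?g = "\<lambda>p :: real \<times> ('a \<times> 'b \<times> 'c). (snd p, dilation (fst p) (snd p))"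
  have "{(e, z). e \<in> E \<and> (z, dilation e z) \<in> S} = ?g -` S \<inter> (E \<times> fst ` S)"
    by force
  moreover have "closed (?g -` S)"
    using assms(2) unfolding dilation_def
    by (intro closed_vimage compact_imp_closed continuous_intros)
  moreover have "compact (E \<times> fst ` S)"
    using assms by (intro compact_Times compact_continuous_image continuous_intros)
  ultimately show ?thesis by auto
qed

section \<open>The family of delta distributions\<close>

lemma delta_fam_eq_integral:
  "delta_fam l f = integral\<^sup>L lborel (\<lambda>z. f (z, dilation (escale l) z))"
  by (simp add: delta_fam_def dil_eq_dilation)

lemma delta_fam_cis_eq_fourier:
  "delta_fam l (\<lambda>w. f w * cis (- (\<xi> \<bullet> w)))
     = integral\<^sup>L lborel (\<lambda>z. f (z, dilation (escale l) z)
         * cis (- ((fst \<xi> + dilation (escale l) (snd \<xi>)) \<bullet> z)))"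
  by (simp add: delta_fam_eq_integral inner_dilation_graph)

lemma test_fn_on_dilation_graph:
  assumes "test_fn f" and R: "\<And>p. p \<in> tsupp f \<Longrightarrow> norm p \<le> R"
  shows "smooth_fn (\<lambda>z. f (z, dilation e z))"
    and "\<And>z. R < norm z \<Longrightarrow> f (z, dilation e z) = 0"
proof -
  show "smooth_fn (\<lambda>z. f (z, dilation e z))"
    by (rule smooth_fn_compose_linear[OF _ bounded_linear_dilation_graph])
      (use assms(1) in \<open>simp add: test_fn_def\<close>)
  fix z :: "'a \<times> 'b \<times> 'c"
  assume "R < norm z"
  then have "(z, dilation e z) \<notin> tsupp f"
    using R norm_fst_le[of z "dilation e z"] by fastforce
  then show "f (z, dilation e z) = 0"
    by (rule eq_0_outside_tsupp)
qed

lemma integrable_on_dilation_graph: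
  assumes "test_fn f"
  shows "integrable lborel (\<lambda>z. f (z, dilation e z))"
proof -
  obtain R where "\<And>p. p \<in> tsupp f \<Longrightarrow> norm p \<le> R"
    using test_fn_tsupp_bounded[OF assms] by blast
  from test_fn_on_dilation_graph[OF assms this] show ?thesis
    by (intro integrable_vanishing_outside[where R = R] smooth_fn_continuous)
qed

lemma delta_fam_linear:
  assumes "test_fn f" "test_fn g"
  shows "delta_fam l (\<lambda>w. a * f w + b * g w) = a * delta_fam l f + b * delta_fam l g"
  using integrable_on_dilation_graph[OF assms(1)] integrable_on_dilation_graph[OF assms(2)]
  by (simp add: delta_fam_eq_integral)

lemma delta_fam_bounded:
  assumes "bounded_testset B"
  shows "\<exists>C. \<forall>l f. f \<in> B \<longrightarrow> norm (delta_fam l f) \<le> C"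
proof -
  obtain K where "compact K" and K: "\<And>f. f \<in> B \<Longrightarrow> tsupp f \<subseteq> K"
    using assms unfolding bounded_testset_def by blast
  obtain R where R: "\<And>p. p \<in> K \<Longrightarrow> norm p \<le> R"
    using compact_imp_bounded[OF \<open>compact K\<close>] by (meson bounded_iff)
  obtain C where "\<forall>f\<in>B. \<forall>vs z. length vs = 0 \<and> (\<forall>v\<in>set vs. norm v \<le> 1)
      \<longrightarrow> norm (dderiv f vs z) \<le> C"
    using assms unfolding bounded_testset_def by blast
  then have C: "\<And>f z. f \<in> B \<Longrightarrow> norm (f z) \<le> C"
    by (metis dderiv.simps(1) empty_iff list.size(3) list.set(1))
  have "norm (delta_fam l f) \<le> C * measure lborel (cball (0::'a \<times> 'b \<times> 'c) R)" if "f \<in> B" for l f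
  proof -
    have f: "test_fn f" using assms that unfolding bounded_testset_def by blast
    have Rf: "\<And>p. p \<in> tsupp f \<Longrightarrow> norm p \<le> R"
      using K[OF that] R by blast
    note g = test_fn_on_dilation_graph[OF f Rf, where e = "escale l"]
    show ?thesis
      unfolding delta_fam_eq_integral
      using g C[OF that]
      by (intro norm_integral_vanishing_outside_le smooth_fn_continuous) auto
  qed
  then show ?thesis by blast
qed

lemma dilation_graph_fourier_decay:
  fixes chi :: "(('a::euclidean_space \<times> 'b::euclidean_space \<times> 'c::euclidean_space) \<times> ('a \<times> 'b \<times> 'c))
    \<Rightarrow> complex"
  assumes chi: "test_fn chi"
  obtains C where "\<And>e u. \<bar>e\<bar> \<le> 1 \<Longrightarrow>
    (1 + norm u) ^ N * norm (integral\<^sup>L lborel (\<lambda>z. chi (z, dilation e z) * cis (- (u \<bullet> z)))) \<le> C"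
proof -
  have "smooth_fn chi"
    using chi by (simp add: test_fn_def)
  obtain R where R: "\<And>p. p \<in> tsupp chi \<Longrightarrow> norm p \<le> R"
    using test_fn_tsupp_bounded[OF chi] by blast
  let ?D = "real DIM(('a \<times> 'b \<times> 'c) \<times> ('a \<times> 'b \<times> 'c))"
  obtain B0 where "B0 \<ge> 0" and "\<And>r vs z. r \<ge> 0 \<Longrightarrow> length vs = 0 \<Longrightarrow> (\<And>v. v \<in> set vs \<Longrightarrow> norm v \<le> r) \<Longrightarrow>
      norm (dderiv chi vs z) \<le> (?D * r) ^ 0 * B0"
    using test_fn_dderiv_bound[OF chi, of 0] by blast
  from this(2)[of 0 "[]"] have B0: "norm (chi z) \<le> B0" for z
    by simp
  obtain B where "B \<ge> 0" and B: "\<And>r vs z. r \<ge> 0 \<Longrightarrow> length vs = N \<Longrightarrow> (\<And>v. v \<in> set vs \<Longrightarrow> norm v \<le> r) \<Longrightarrow>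
      norm (dderiv chi vs z) \<le> (?D * r) ^ N * B"
    using test_fn_dderiv_bound[OF chi, of N] by blast
  have "(1 + norm u) ^ N * norm (integral\<^sup>L lborel (\<lambda>z. chi (z, dilation e z) * cis (- (u \<bullet> z))))
      \<le> 2 ^ N * (B0 * measure lborel (cball (0::'a \<times> 'b \<times> 'c) R))
        + (?D * 2 * pi) ^ N * B * measure lborel (cball (0::'a \<times> 'b \<times> 'c) (R + N * pi))"
    if e: "\<bar>e\<bar> \<le> 1" for e u
  proof -
    have g: "smooth_fn (\<lambda>z. chi (z, dilation e z))" "\<And>z. R < norm z \<Longrightarrow> chi (z, dilation e z) = 0"
      using test_fn_on_dilation_graph[OF chi R] by blast+
    have "norm (dderiv (\<lambda>z. chi (z, dilation e z)) vs y) \<le> (?D * 2 * r) ^ N * B"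
      if "r \<ge> 0" "length vs = N" "\<And>v. v \<in> set vs \<Longrightarrow> norm v \<le> r" for r vs y
      by (rule norm_dderiv_compose_linear_le[OF \<open>smooth_fn chi\<close> bounded_linear_dilation_graph _
            norm_dilation_graph_le[OF e] B that]) simp
    then show ?thesis
      by (intro fourier_integral_decay[OF g B0 _ \<open>B \<ge> 0\<close>]) simp_all
  qed
  then show ?thesis
    using that by blast
qed

lemma dilated_covector_nonzero:
  assumes disj: "(S \<times> V) \<inter> twist Gamma_rho = {}"
    and e: "0 \<le> e" "e \<le> exp (-1)" and z: "(z, dilation e z) \<in> S"
    and w: "w \<in> V" "w \<noteq> 0"
  shows "fst w + dilation e (snd w) \<noteq> 0"
proof
  assume "fst w + dilation e (snd w) = 0"
  obtain l where l: "1 \<le> l" "escale l = e"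
    using escale_surj[OF e] by blast
  define \<mu> where "\<mu> = - snd w"
  from \<open>fst w + dilation e (snd w) = 0\<close> have w_eq: "w = (dil l \<mu>, - \<mu>)"
    by (simp add: \<mu>_def dil_eq_dilation l(2) dilation_def prod_eq_iff eq_neg_iff_add_eq_0)
  with w(2) have "\<mu> \<noteq> 0"
    by (auto simp: dil_def zero_prod_def)
  with l(1) have "((z, dil l z), (dil l \<mu>, \<mu>)) \<in> Gamma_rho"
    unfolding Gamma_rho_def by blast
  then have "((z, dilation e z), w) \<in> twist Gamma_rho"
    unfolding twist_def w_eq dil_eq_dilation l(2)[symmetric] by blast
  with disj z w(1) show False by blast
qed

lemma covector_lower_bound:
  fixes S :: "(('a::euclidean_space \<times> 'b::euclidean_space \<times> 'c::euclidean_space) \<times> ('a \<times> 'b \<times> 'c)) set"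
  assumes "compact S" "closed_cone V" "(S \<times> V) \<inter> twist Gamma_rho = {}"
  obtains c where "c > 0"
    "\<And>e z w. 0 \<le> e \<Longrightarrow> e \<le> exp (-1) \<Longrightarrow> (z, dilation e z) \<in> S \<Longrightarrow> w \<in> V \<Longrightarrow>
       c * norm w \<le> norm (fst w + dilation e (snd w))"
proof -
  let ?K = "{(e, z). e \<in> {0..exp (-1)} \<and> (z, dilation e z) \<in> S}"
  have "compact ?K"
    using assms(1) by (intro compact_dilation_graph_vimage) auto
  moreover have "continuous_on (?K \<times> V) (\<lambda>(p, w). fst w + dilation (fst p) (snd w))"
    unfolding split_beta dilation_def by (intro continuous_intros)
  moreover have "linear (\<lambda>w. fst w + dilation (fst p) (snd w))" for p
    by (intro bounded_linear.linear bounded_linear_add bounded_linear_fst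
        bounded_linear_compose[OF bounded_linear_dilation bounded_linear_snd])
  moreover have "fst w + dilation (fst p) (snd w) \<noteq> 0" if "p \<in> ?K" "w \<in> V" "w \<noteq> 0" for p w
  proof -
    obtain e z where p: "p = (e, z)" by (cases p)
    with that(1) have "0 \<le> e" "e \<le> exp (-1)" "(z, dilation e z) \<in> S" by auto
    from dilated_covector_nonzero[OF assms(3) this that(2,3)] show ?thesis
      by (simp add: p)
  qed
  ultimately obtain c where c: "c > 0"
    "\<And>p w. p \<in> ?K \<Longrightarrow> w \<in> V \<Longrightarrow> c * norm w \<le> norm (fst w + dilation (fst p) (snd w))"
    using compact_cone_lower_bound[OF _ assms(2), of ?K "\<lambda>p w. fst w + dilation (fst p) (snd w)"]
    by blast
  show ?thesis
  proof (rule that[OF c(1)])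
    fix e z w
    assume "0 \<le> e" "e \<le> exp (-1)" "(z, dilation e z) \<in> S" "w \<in> V"
    then show "c * norm w \<le> norm (fst w + dilation e (snd w))"
      using c(2)[of "(e, z)" w] by simp
  qed
qed

lemma delta_fam_wavefront_decay:
  fixes chi :: "(('a::euclidean_space \<times> 'b::euclidean_space \<times> 'c::euclidean_space) \<times> ('a \<times> 'b \<times> 'c))
    \<Rightarrow> complex"
  assumes chi: "test_fn chi" and V: "closed_cone V" and disj: "(tsupp chi \<times> V) \<inter> twist Gamma_rho = {}"
  shows "\<exists>C. \<forall>l. 1 \<le> l \<longrightarrow> (\<forall>\<xi>\<in>V.
           (1 + norm \<xi>) ^ N * norm (delta_fam l (\<lambda>w. chi w * cis (- (\<xi> \<bullet> w)))) \<le> C)"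
proof -
  obtain C where C: "\<And>e u. \<bar>e\<bar> \<le> 1 \<Longrightarrow>
      (1 + norm u) ^ N * norm (integral\<^sup>L lborel (\<lambda>z. chi (z, dilation e z) * cis (- (u \<bullet> z)))) \<le> C"
    using dilation_graph_fourier_decay[OF chi] by blast
  have "compact (tsupp chi)"
    using chi by (simp add: test_fn_def)
  then obtain c where "c > 0" and c: "\<And>e z w. 0 \<le> e \<Longrightarrow> e \<le> exp (-1) \<Longrightarrow>
      (z, dilation e z) \<in> tsupp chi \<Longrightarrow> w \<in> V \<Longrightarrow> c * norm w \<le> norm (fst w + dilation e (snd w))"
    using covector_lower_bound[OF _ V disj] by blast
  have "(1 + norm \<xi>) ^ N * norm (delta_fam l (\<lambda>w. chi w * cis (- (\<xi> \<bullet> w)))) \<le> (1 + 1 / c) ^ N * C"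
    if "1 \<le> l" "\<xi> \<in> V" for l \<xi>
  proof -
    define e where "e = escale l"
    have e: "0 \<le> e" "e \<le> exp (-1)" "\<bar>e\<bar> \<le> 1"
      using escale_bounds[OF \<open>1 \<le> l\<close>] escale_le_1[OF \<open>1 \<le> l\<close>] by (simp_all add: e_def)
    define u where "u = fst \<xi> + dilation e (snd \<xi>)"
    define F where "F = integral\<^sup>L lborel (\<lambda>z. chi (z, dilation e z) * cis (- (u \<bullet> z)))"
    have decay: "(1 + norm u) ^ N * norm F \<le> C"
      unfolding F_def by (rule C[OF e(3)])
    have "(1 + norm \<xi>) ^ N * norm F \<le> (1 + 1 / c) ^ N * C"
    proof (cases "\<exists>z. (z, dilation e z) \<in> tsupp chi")
      case True
      then obtain z where "(z, dilation e z) \<in> tsupp chi" by blast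
      from c[OF e(1,2) this \<open>\<xi> \<in> V\<close>] have "c * norm \<xi> \<le> norm u"
        by (simp add: u_def)
      then have "(1 + norm \<xi>) ^ N \<le> (1 + 1 / c) ^ N * (1 + norm u) ^ N"
        by (rule one_add_power_le_of_mult_le[OF \<open>c > 0\<close> norm_ge_zero])
      then have "(1 + norm \<xi>) ^ N * norm F \<le> (1 + 1 / c) ^ N * (1 + norm u) ^ N * norm F"
        by (rule mult_right_mono) simp
      also have "\<dots> \<le> (1 + 1 / c) ^ N * C"
        using decay \<open>c > 0\<close> by (simp add: mult.assoc mult_left_mono)
      finally show ?thesis .
    next
      case False
      then have "chi (z, dilation e z) = 0" for z
        by (blast intro: eq_0_outside_tsupp)
      then have "F = 0"
        by (simp add: F_def)
      moreover have "0 \<le> (1 + norm u) ^ N * norm F" by simp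
      then have "0 \<le> C" using decay by linarith
      ultimately show ?thesis
        using \<open>c > 0\<close> by simp
    qed
    then show ?thesis
      by (simp add: delta_fam_cis_eq_fourier F_def u_def e_def)
  qed
  then show ?thesis by blast
qed

theorem lemma3p2:
  shows "bounded_in_DGamma
           (twist (Gamma_rho :: ((('a::euclidean_space \<times> 'b::euclidean_space \<times> 'c::euclidean_space)
               \<times> ('a \<times> 'b \<times> 'c)) \<times> (('a \<times> 'b \<times> 'c) \<times> ('a \<times> 'b \<times> 'c))) set))
           delta_fam {l::ereal. 1 \<le> l}"
  unfolding bounded_in_DGamma_def
proof (intro conjI allI impI ballI)
  show "delta_fam l (\<lambda>w. a * f w + b * g w) = a * delta_fam l f + b * delta_fam l g"
    if "test_fn f \<and> test_fn g" for l f g and a b :: complex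
    using that by (simp add: delta_fam_linear)
  show "\<exists>C. \<forall>l\<in>{l. 1 \<le> l}. \<forall>f\<in>B. norm (delta_fam l f) \<le> C" if "bounded_testset B" for B
    using delta_fam_bounded[OF that] by blast
  show "\<exists>C. \<forall>l\<in>{l. 1 \<le> l}. \<forall>\<xi>\<in>V.
          (1 + norm \<xi>) ^ N * norm (delta_fam l (\<lambda>w. chi w * cis (- (\<xi> \<bullet> w)))) \<le> C"
    if "test_fn chi \<and> closed_cone V \<and> (tsupp chi \<times> V) \<inter> twist Gamma_rho = {}" for N chi V
    using that delta_fam_wavefront_decay[of chi V N] by simp
qed

end
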